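(* Let $m,n\ge0$ be integers with $m+n\ge1$. Then the poset of nonempty faces of the nestohedron $P_{\mathcal B_{m,n}}$, ordered by inclusion, is anti-isomorphic to the poset $(\mathcal P_{(m,n)},\le)$ of $m$-lighted $n$-shades; that is, $P_{\mathcal B_{m,n}}$ is a polytope realization of the $(m,n)$-Hochschild polytope $\mathrm{Hoch}(m,n)$ (the abstract polytope whose face poset is anti-isomorphic to $(\mathcal P_{(m,n)},\le)$).
   Context: For integers $i\le j$, $[i,j]=\{\ell\in\mathbb Z: i\le\ell\le j\}$ and $[N]=[1,N]$. $\mathcal B_{m,n}$ is the collection of nonempty subsets $I\subseteq[m+n]$ such that whenever $|I|\ge2$, $I\cap[m+1,m+n]$ is either $\emptyset$ or $[m+r,m+n]$ for some $1\le r\le n$. The nestohedron of a building set $\mathcal B$ on $[N]$ is the Minkowski sum $P_{\mathcal B}=\sum_{I\in\mathcal B}\mathrm{conv}\{e_i:i\in I\}\subset\mathbb R^{N}$. An $m$-lighted $n$-shade is a finite sequence $\mathbf S=((s_1,c_1),\ldots,(s_\ell,c_\ell))$, $\ell\ge1$, where each $s_i$ is a (possibly empty) tuple of positive integers, the sum of all entries of all $s_1,\dots,s_\ell$ equals $n$, the $c_i$ are pairwise disjoint (possibly empty) subsets of $[m]$ with $c_1\cup\dots\cup c_\ell=[m]$, and for each $i$, $s_i$ and $c_i$ are not both empty. Write $\mathbf S'\to\mathbf S$ if either (a) for some $1\le i<\ell$, $\mathbf S'$ is obtained from $\mathbf S$ by replacing the two consecutive pairs $(s_i,c_i),(s_{i+1},c_{i+1})$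 by the single pair $(s_i s_{i+1},c_i\cup c_{i+1})$, where $s_is_{i+1}$ is the concatenation of the tuples; or (b) for some $i$ and some entry $s_i^r$ of $s_i=(s_i^1,\dots,s_i^p)$, $\mathbf S'$ is obtained from $\mathbf S$ by replacing $s_i$ with $(s_i^1,\dots,s_i^{r-1},a,b,s_i^{r+1},\dots,s_i^p)$ where $a,b$ are positive integers with $a+b=s_i^r$. The partial order $\le$ on the set $\mathcal P_{(m,n)}$ of all $m$-lighted $n$-shades is the reflexive–transitive closure of $\to$ (i.e. $\mathbf S'\le\mathbf S$ iff $\mathbf S'=\mathbf S$ or there is a sequence $\mathbf S'\to\mathbf S_1\to\cdots\to\mathbf S$). *)

theory Defs
  imports "HOL-Analysis.Analysis"
begin

definition building_set :: "nat \<Rightarrow> nat \<Rightarrow> nat set set" where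
  "building_set m n = {I. I \<noteq> {} \<and> I \<subseteq> {1..m+n} \<and>
     (card I \<ge> 2 \<longrightarrow>
        (I \<inter> {m+1..m+n} = {} \<or>
         (\<exists>r. 1 \<le> r \<and> r \<le> n \<and> I \<inter> {m+1..m+n} = {m+r..m+n})))}"

text \<open>Nestohedron: Minkowski sum over I in B of conv{e_i : i in I},
  where e i is the i-th standard basis vector.\<close>
definition nestohedron :: "('i \<Rightarrow> 'v::real_vector) \<Rightarrow> 'i set set \<Rightarrow> 'v set" where
  "nestohedron e B = {x. \<exists>p. (\<forall>I\<in>B. p I \<in> convex hull (e ` I)) \<and> x = (\<Sum>I\<in>B. p I)}"

text \<open>An m-lighted n-shade: list of pairs (s_i, c_i), s_i a tuple of positive integers,
  c_i a subset of [m].\<close>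
type_synonym shade = "(nat list \<times> nat set) list"

definition is_shade :: "nat \<Rightarrow> nat \<Rightarrow> shade \<Rightarrow> bool" where
  "is_shade m n S \<longleftrightarrow>
     S \<noteq> [] \<and>
     (\<forall>(s, c) \<in> set S. (\<forall>a \<in> set s. a > 0) \<and> c \<subseteq> {1..m} \<and> (s \<noteq> [] \<or> c \<noteq> {})) \<and>
     sum_list (map (\<lambda>(s, c). sum_list s) S) = n \<and>
     (\<forall>i j. i < j \<and> j < length S \<longrightarrow> snd (S ! i) \<inter> snd (S ! j) = {}) \<and>
     (\<Union>(s, c) \<in> set S. c) = {1..m}"

definition shades :: "nat \<Rightarrow> nat \<Rightarrow> shade set" where
  "shades m n = {S. is_shade m n S}"

inductive shade_step :: "shade \<Rightarrow> shade \<Rightarrow> bool" where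
  merge: "shade_step (xs @ [(s1 @ s2, c1 \<union> c2)] @ ys) (xs @ [(s1, c1), (s2, c2)] @ ys)"
| split: "0 < a \<Longrightarrow> 0 < b \<Longrightarrow>
          shade_step (xs @ [(us @ [a, b] @ vs, c)] @ ys) (xs @ [(us @ [a + b] @ vs, c)] @ ys)"

definition shade_le :: "shade \<Rightarrow> shade \<Rightarrow> bool" where
  "shade_le S' S \<longleftrightarrow> shade_step\<^sup>*\<^sup>* S' S"

end

theory Submission
  imports Defs
begin

text \<open>
  The nonempty faces of a polytope are the sets on which linear functionals attain their
  maximum. The face of a functional \<open>a\<close> on a Minkowski sum of simplices
  \<open>conv{e\<^sub>i : i \<in> I}\<close> is the sum of the faces of the summands, so it is determined by the
  sets of indices maximising \<open>a\<close> within each \<open>I\<close>, and faces are ordered by inclusion of these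
  sets. Every member of \<open>B\<^sub>m\<^sub>,\<^sub>n\<close> is a singleton or a union of minimal members, namely
  singletons \<open>{x}\<close> with \<open>x \<le> m\<close> and tails \<open>{m+r+1..m+n}\<close>. Hence the face of \<open>a\<close> is
  determined by the weak order of the maxima of \<open>a\<close> over the minimal members, together with the
  set of tails whose maximum is attained at their first element. Listing the minimal members by
  decreasing maximum, the tails becoming consecutive units that are cut after each tail of the
  second kind, yields an \<open>m\<close>-lighted \<open>n\<close>-shade, and every shade arises in this way. A face
  contains another iff its weak order is coarser and its set of cuts is larger, and this is
  exactly the order on shades generated by merging consecutive pairs and splitting entries.
\<close>

section \<open>Faces of nestohedra\<close>

definition argmax_on :: "('i \<Rightarrow> 'a::linorder) \<Rightarrow> 'i set \<Rightarrow> 'i set" where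
  "argmax_on w I = {i\<in>I. \<forall>j\<in>I. w j \<le> w i}"

lemma argmax_on_iff: "i \<in> argmax_on w I \<longleftrightarrow> i \<in> I \<and> (\<forall>j\<in>I. w j \<le> w i)"
  by (simp add: argmax_on_def)

lemma argmax_on_Max:
  assumes "finite I" "i \<in> argmax_on w I"
  shows "w i = Max (w ` I)"
  using assms by (auto simp: argmax_on_def intro!: antisym Max_ge) (subst Max_le_iff; auto)

lemma argmax_on_nonempty:
  assumes "finite I" "I \<noteq> {}"
  shows "argmax_on w I \<noteq> {}"
proof -
  have "Max (w ` I) \<in> w ` I" using assms by simp
  then obtain i where "i \<in> I" "w i = Max (w ` I)" by auto
  then show ?thesis using assms by (auto simp: argmax_on_def)
qed

lemma argmax_on_cong: "(\<And>i. i \<in> I \<Longrightarrow> w i = w' i) \<Longrightarrow> argmax_on w I = argmax_on w' I"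
  by (auto simp: argmax_on_def)

lemma Max_image_le_iff_argmax_on_Un:
  fixes w :: "'i \<Rightarrow> 'a::linorder"
  assumes "finite X" "finite Y" "X \<noteq> {}" "Y \<noteq> {}"
  shows "Max (w ` Y) \<le> Max (w ` X) \<longleftrightarrow> argmax_on w (X \<union> Y) \<inter> X \<noteq> {}"
proof
  assume le: "Max (w ` Y) \<le> Max (w ` X)"
  have "Max (w ` X) \<in> w ` X" using assms by simp
  then obtain x where x: "x \<in> X" "w x = Max (w ` X)" by auto
  have "w j \<le> w x" if "j \<in> X \<union> Y" for j
  proof (cases "j \<in> X")
    case True
    then show ?thesis using x assms(1) by simp
  next
    case False
    then have "w j \<le> Max (w ` Y)" using that assms(2) by simp
    then show ?thesis using le x by simp
  qed
  then have "x \<in> argmax_on w (X \<union> Y)"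
    using x by (simp add: argmax_on_iff)
  then show "argmax_on w (X \<union> Y) \<inter> X \<noteq> {}" using x by blast
next
  assume "argmax_on w (X \<union> Y) \<inter> X \<noteq> {}"
  then obtain x where "x \<in> X" "\<forall>j\<in>X \<union> Y. w j \<le> w x" by (auto simp: argmax_on_def)
  then show "Max (w ` Y) \<le> Max (w ` X)"
    using assms by (subst Max_le_iff) (auto intro: order.trans)
qed

definition max_face :: "'a::real_inner set \<Rightarrow> 'a \<Rightarrow> 'a set" where
  "max_face P a = {x\<in>P. \<forall>y\<in>P. a \<bullet> y \<le> a \<bullet> x}"

lemma face_of_polytope_iff_max_face:
  fixes P :: "'a::euclidean_space set"
  assumes "polytope P" "P \<noteq> {}"
  shows "F face_of P \<and> F \<noteq> {} \<longleftrightarrow> (\<exists>a. F = max_face P a)"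
proof
  assume F: "F face_of P \<and> F \<noteq> {}"
  then have "F exposed_face_of P"
    using assms(1) exposed_face_of_polyhedron polytope_imp_polyhedron by blast
  then obtain a b where "P \<subseteq> {x. a \<bullet> x \<le> b}" "F = P \<inter> {x. a \<bullet> x = b}"
    unfolding exposed_face_of_def by blast
  then show "\<exists>a. F = max_face P a"
    using F unfolding max_face_def by (intro exI[of _ a]) force
next
  assume "\<exists>a. F = max_face P a"
  then obtain a where F: "F = max_face P a" ..
  have "compact P" using assms(1) by (rule polytope_imp_compact)
  then obtain x where x: "x \<in> P" "\<forall>y\<in>P. a \<bullet> y \<le> a \<bullet> x"
    using continuous_attains_sup[of P "\<lambda>x. a \<bullet> x"] assms(2)
    using continuous_on_inner[OF continuous_on_const continuous_on_id] by blast
  have "F = P \<inter> {y. a \<bullet> y = a \<bullet> x}"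
    using x by (auto simp: F max_face_def intro: antisym)
  then have "F face_of P"
    using face_of_Int_supporting_hyperplane_le[of P a "a \<bullet> x"] x(2) assms(1) polytope_imp_convex
    by auto
  moreover have "x \<in> F" using x by (simp add: F max_face_def)
  ultimately show "F face_of P \<and> F \<noteq> {}" by blast
qed

definition weight :: "('i \<Rightarrow> 'a::real_inner) \<Rightarrow> 'a \<Rightarrow> 'i \<Rightarrow> real" where
  "weight e a i = a \<bullet> e i"

lemma nestohedron_eq_set_sum:
  assumes "finite B"
  shows "nestohedron e B = (\<Sum>I\<in>B. convex hull (e ` I))"
  unfolding nestohedron_def set_sum_alt[OF assms] by auto

lemma polytope_nestohedron:
  fixes e :: "'i \<Rightarrow> 'a::euclidean_space"
  assumes "finite B" "\<forall>I\<in>B. finite I"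
  shows "polytope (nestohedron e B)"
proof -
  have "nestohedron e B = convex hull (\<Sum>I\<in>B. e ` I)"
    by (simp add: nestohedron_eq_set_sum[OF assms(1)] convex_hull_set_sum)
  moreover have "finite (\<Sum>I\<in>B. e ` I)"
    using assms(2) by (intro finite_set_sum) auto
  ultimately show ?thesis unfolding polytope_def by blast
qed

lemma inner_le_Max_weight:
  assumes "finite I" "p \<in> convex hull (e ` I)"
  shows "a \<bullet> p \<le> Max (weight e a ` I)"
proof -
  have "e ` I \<subseteq> {x. a \<bullet> x \<le> Max (weight e a ` I)}"
    using assms(1) by (auto simp: weight_def)
  then have "convex hull (e ` I) \<subseteq> {x. a \<bullet> x \<le> Max (weight e a ` I)}"
    by (intro hull_minimal) (auto simp: convex_halfspace_le)
  then show ?thesis using assms(2) by auto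
qed

lemma convex_combination_eq_Max:
  fixes f :: "'x \<Rightarrow> real"
  assumes "finite X" "\<forall>x\<in>X. 0 \<le> u x" "sum u X = 1" "(\<Sum>x\<in>X. u x * f x) = Max (f ` X)"
    and "x \<in> X" "u x \<noteq> 0"
  shows "f x = Max (f ` X)"
proof -
  let ?M = "Max (f ` X)"
  have "(\<Sum>x\<in>X. u x * (?M - f x)) = (\<Sum>x\<in>X. u x * ?M) - (\<Sum>x\<in>X. u x * f x)"
    by (simp add: right_diff_distrib sum_subtractf)
  moreover have "(\<Sum>x\<in>X. u x * ?M) = ?M"
    using assms(3) by (simp add: sum_distrib_right[symmetric])
  ultimately have sum0: "(\<Sum>x\<in>X. u x * (?M - f x)) = 0" using assms(4) by simp
  have nonneg: "0 \<le> u y * (?M - f y)" if "y \<in> X" for y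
  proof -
    have "0 \<le> u y" "f y \<le> ?M" using assms(1,2) that by simp_all
    then show ?thesis by simp
  qed
  have "\<forall>x\<in>X. u x * (?M - f x) = 0"
    using sum_nonneg_eq_0_iff[OF assms(1) nonneg] sum0 by simp
  then show ?thesis using assms(5,6) by force
qed

text \<open>A point of the simplex over \<open>I\<close> maximising \<open>a\<close> is a convex combination of vertices
  maximising \<open>a\<close>; if those also maximise \<open>a'\<close>, so does the point.\<close>
lemma inner_eq_Max_weight_if_argmax_subset:
  assumes "finite I" "p \<in> convex hull (e ` I)" "a \<bullet> p = Max (weight e a ` I)"
    and "argmax_on (weight e a) I \<subseteq> argmax_on (weight e a') I"
  shows "a' \<bullet> p = Max (weight e a' ` I)"
proof -
  have fin: "finite (e ` I)" using assms(1) by simp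
  obtain u where u0: "\<forall>x\<in>e ` I. 0 \<le> u x" and u1: "sum u (e ` I) = 1"
    and up: "(\<Sum>x\<in>e ` I. u x *\<^sub>R x) = p"
    using assms(2) unfolding convex_hull_finite[OF fin] by blast
  have inner_p: "v \<bullet> p = (\<Sum>x\<in>e ` I. u x * (v \<bullet> x))" for v
    by (simp add: up[symmetric] inner_sum_right)
  have Max_weight: "Max ((\<lambda>x. v \<bullet> x) ` e ` I) = Max (weight e v ` I)" for v
    by (simp add: image_image weight_def)
  have le: "v \<bullet> e i \<le> Max (weight e v ` I)" if "i \<in> I" for v i
    using Max_ge[OF finite_imageI[OF assms(1)] imageI[OF that]] by (simp add: weight_def)
  have "u x * (a' \<bullet> x) = u x * Max (weight e a' ` I)" if x: "x \<in> e ` I" for x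
  proof (cases "u x = 0")
    case False
    obtain i where i: "i \<in> I" "x = e i" using x by blast
    have "(\<Sum>x\<in>e ` I. u x * (a \<bullet> x)) = Max ((\<lambda>x. a \<bullet> x) ` e ` I)"
      unfolding Max_weight inner_p[symmetric] by (rule assms(3))
    then have "a \<bullet> x = Max ((\<lambda>x. a \<bullet> x) ` e ` I)"
      by (rule convex_combination_eq_Max[OF fin u0 u1 _ x False])
    then have "a \<bullet> e i = Max (weight e a ` I)" unfolding Max_weight i(2) .
    then have "\<forall>j\<in>I. weight e a j \<le> weight e a i"
      using le[of _ a] by (simp add: weight_def)
    then have "i \<in> argmax_on (weight e a) I"
      using i(1) by (simp add: argmax_on_iff)
    then have "weight e a' i = Max (weight e a' ` I)"
      using assms(4) argmax_on_Max[OF assms(1)] by blast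
    then show ?thesis using i by (simp add: weight_def)
  qed simp
  then have "a' \<bullet> p = (\<Sum>x\<in>e ` I. u x * Max (weight e a' ` I))"
    unfolding inner_p by (rule sum.cong[OF refl])
  then show ?thesis by (simp add: sum_distrib_right[symmetric] u1)
qed

locale finite_nonempty_family =
  fixes B :: "'i set set"
  assumes finite_family: "finite B"
    and finite_member: "\<And>I. I \<in> B \<Longrightarrow> finite I"
    and nonempty_member: "\<And>I. I \<in> B \<Longrightarrow> I \<noteq> {}"
begin

lemma argmax_on_member_nonempty: "I \<in> B \<Longrightarrow> argmax_on w I \<noteq> {}"
  by (simp add: argmax_on_nonempty finite_member nonempty_member)

lemma nestohedron_inner_le:
  "x \<in> nestohedron e B \<Longrightarrow> a \<bullet> x \<le> (\<Sum>I\<in>B. Max (weight e a ` I))"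
  unfolding nestohedron_def
  by (auto simp: inner_sum_right intro!: sum_mono inner_le_Max_weight finite_member)

lemma nestohedron_inner_attains:
  "\<exists>x\<in>nestohedron e B. a \<bullet> x = (\<Sum>I\<in>B. Max (weight e a ` I))"
proof -
  define p where "p I = e (SOME i. i \<in> argmax_on (weight e a) I)" for I
  have p: "p I \<in> convex hull (e ` I) \<and> a \<bullet> p I = Max (weight e a ` I)" if "I \<in> B" for I
  proof -
    let ?i = "SOME i. i \<in> argmax_on (weight e a) I"
    have i: "?i \<in> argmax_on (weight e a) I"
      using argmax_on_member_nonempty[OF that] by (simp add: some_in_eq)
    have "a \<bullet> p I = Max (weight e a ` I)"
      using argmax_on_Max[OF finite_member[OF that] i] by (simp add: p_def weight_def)
    moreover have "p I \<in> convex hull (e ` I)"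
      using i unfolding p_def argmax_on_iff by (blast intro: hull_inc)
    ultimately show ?thesis by blast
  qed
  have "sum p B \<in> nestohedron e B"
    using p unfolding nestohedron_def by (auto intro!: exI[of _ p])
  moreover have "a \<bullet> sum p B = (\<Sum>I\<in>B. Max (weight e a ` I))"
    using p by (simp add: inner_sum_right)
  ultimately show ?thesis by blast
qed

lemma max_face_nestohedron:
  "max_face (nestohedron e B) a =
     {x \<in> nestohedron e B. a \<bullet> x = (\<Sum>I\<in>B. Max (weight e a ` I))}"
proof -
  obtain x where x: "x \<in> nestohedron e B" "a \<bullet> x = (\<Sum>I\<in>B. Max (weight e a ` I))"
    using nestohedron_inner_attains by blast
  have "(\<forall>z\<in>nestohedron e B. a \<bullet> z \<le> a \<bullet> y) \<longleftrightarrow> a \<bullet> y = (\<Sum>I\<in>B. Max (weight e a ` I))"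
    if "y \<in> nestohedron e B" for y
    using x nestohedron_inner_le[of _ e a] that by (metis antisym)
  then show ?thesis unfolding max_face_def by blast
qed

lemma max_face_summands:
  assumes "\<forall>I\<in>B. p I \<in> convex hull (e ` I)" "sum p B \<in> max_face (nestohedron e B) a"
  shows "\<forall>I\<in>B. a \<bullet> p I = Max (weight e a ` I)"
proof -
  have gap: "0 \<le> Max (weight e a ` I) - a \<bullet> p I" if "I \<in> B" for I
  proof -
    have "p I \<in> convex hull (e ` I)" using assms(1) that by blast
    from inner_le_Max_weight[OF finite_member[OF that] this] show ?thesis by simp
  qed
  have "a \<bullet> sum p B = (\<Sum>I\<in>B. Max (weight e a ` I))"
    using assms(2) by (simp add: max_face_nestohedron)
  then have "(\<Sum>I\<in>B. Max (weight e a ` I) - a \<bullet> p I) = 0"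
    by (simp add: inner_sum_right sum_subtractf)
  then have "\<forall>I\<in>B. Max (weight e a ` I) - a \<bullet> p I = 0"
    using sum_nonneg_eq_0_iff[OF finite_family, of "\<lambda>I. Max (weight e a ` I) - a \<bullet> p I"] gap
    by blast
  then show ?thesis by simp
qed

lemma max_face_nestohedron_mono:
  assumes "\<forall>I\<in>B. argmax_on (weight e a) I \<subseteq> argmax_on (weight e a') I"
  shows "max_face (nestohedron e B) a \<subseteq> max_face (nestohedron e B) a'"
proof
  fix x assume x: "x \<in> max_face (nestohedron e B) a"
  then obtain p where p: "\<forall>I\<in>B. p I \<in> convex hull (e ` I)" "x = sum p B"
    unfolding max_face_def nestohedron_def by auto
  have "\<forall>I\<in>B. a \<bullet> p I = Max (weight e a ` I)" using max_face_summands p x by auto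
  then have "\<forall>I\<in>B. a' \<bullet> p I = Max (weight e a' ` I)"
    using inner_eq_Max_weight_if_argmax_subset p(1) assms finite_member by blast
  then show "x \<in> max_face (nestohedron e B) a'"
    using x by (simp add: max_face_nestohedron p(2) inner_sum_right)
qed

text \<open>Choosing the vertex \<open>j\<close> in the summand \<open>I0\<close> and any maximiser elsewhere gives a point
  of the face of \<open>a\<close>; lying in the face of \<open>a'\<close>, it forces \<open>j\<close> to maximise \<open>a'\<close>.\<close>
lemma argmax_on_subset_if_max_face_subset:
  assumes H: "max_face (nestohedron e B) a \<subseteq> max_face (nestohedron e B) a'"
    and I0: "I0 \<in> B"
  shows "argmax_on (weight e a) I0 \<subseteq> argmax_on (weight e a') I0"
proof
  fix j assume j: "j \<in> argmax_on (weight e a) I0"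
  define q where "q I = (if I = I0 then j else (SOME i. i \<in> argmax_on (weight e a) I))" for I
  have q: "q I \<in> argmax_on (weight e a) I" if "I \<in> B" for I
    using argmax_on_member_nonempty[OF that, of "weight e a"] j
    unfolding q_def by (simp add: some_in_eq)
  have hull: "\<forall>I\<in>B. e (q I) \<in> convex hull (e ` I)"
    using q by (auto simp: argmax_on_def intro: hull_inc)
  have "a \<bullet> e (q I) = Max (weight e a ` I)" if "I \<in> B" for I
    using argmax_on_Max[OF finite_member[OF that] q[OF that]] by (simp add: weight_def)
  moreover have "(\<Sum>I\<in>B. e (q I)) \<in> nestohedron e B"
    using hull unfolding nestohedron_def by (auto intro!: exI[of _ "\<lambda>I. e (q I)"])
  ultimately have "(\<Sum>I\<in>B. e (q I)) \<in> max_face (nestohedron e B) a"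
    by (simp add: max_face_nestohedron inner_sum_right)
  then have "\<forall>I\<in>B. a' \<bullet> e (q I) = Max (weight e a' ` I)"
    using H max_face_summands[OF hull] by blast
  then have "a' \<bullet> e (q I0) = Max (weight e a' ` I0)"
    using I0 by blast
  then have j_max: "weight e a' j = Max (weight e a' ` I0)"
    by (simp add: q_def weight_def)
  have "weight e a' k \<le> weight e a' j" if "k \<in> I0" for k
    unfolding j_max using finite_member[OF I0] that by simp
  then show "j \<in> argmax_on (weight e a') I0"
    using j by (simp add: argmax_on_def)
qed

lemma max_face_nestohedron_subset_iff:
  "max_face (nestohedron e B) a \<subseteq> max_face (nestohedron e B) a' \<longleftrightarrow>
     (\<forall>I\<in>B. argmax_on (weight e a) I \<subseteq> argmax_on (weight e a') I)"
  using max_face_nestohedron_mono argmax_on_subset_if_max_face_subset by blast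

lemma face_of_nestohedron_iff:
  fixes e :: "'i \<Rightarrow> 'a::euclidean_space"
  shows "F face_of nestohedron e B \<and> F \<noteq> {} \<longleftrightarrow> (\<exists>a. F = max_face (nestohedron e B) a)"
proof (rule face_of_polytope_iff_max_face)
  show "polytope (nestohedron e B)"
    using finite_family finite_member by (simp add: polytope_nestohedron)
  obtain x where "x \<in> nestohedron e B"
    using nestohedron_inner_attains[of e 0] by blast
  then show "nestohedron e B \<noteq> {}" by blast
qed

end

section \<open>The building set \<open>B\<^sub>m\<^sub>,\<^sub>n\<close>\<close>

definition tail :: "nat \<Rightarrow> nat \<Rightarrow> nat \<Rightarrow> nat set" where
  "tail m n r = {m+r+1..m+n}"

text \<open>Each \<open>i \<in> [m+n]\<close> is the first element of a minimal member of \<open>B\<^sub>m\<^sub>,\<^sub>n\<close> containing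
  it: \<open>{i}\<close> if \<open>i \<le> m\<close>, and the tail \<open>{i..m+n}\<close> otherwise. These minimal members are indexed
  by the atoms \<open>Inl i\<close> and \<open>Inr (i-m-1)\<close>, which also index the lights and units of a shade.\<close>
definition atoms :: "nat set \<Rightarrow> nat \<Rightarrow> (nat + nat) set" where
  "atoms C k = Inl ` C \<union> Inr ` {..<k}"

definition atom_set :: "nat \<Rightarrow> nat \<Rightarrow> nat + nat \<Rightarrow> nat set" where
  "atom_set m n z = (case z of Inl x \<Rightarrow> {x} | Inr r \<Rightarrow> tail m n r)"

definition atom_of :: "nat \<Rightarrow> nat \<Rightarrow> nat + nat" where
  "atom_of m i = (if i \<le> m then Inl i else Inr (i - m - 1))"

definition key :: "nat \<Rightarrow> nat \<Rightarrow> (nat \<Rightarrow> real) \<Rightarrow> nat + nat \<Rightarrow> real" where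
  "key m n w z = Max (w ` atom_set m n z)"

definition tight :: "nat \<Rightarrow> nat \<Rightarrow> (nat \<Rightarrow> real) \<Rightarrow> nat \<Rightarrow> bool" where
  "tight m n w r \<longleftrightarrow> m + r + 1 \<in> argmax_on w (tail m n r)"

definition weight_refines :: "nat \<Rightarrow> nat \<Rightarrow> (nat \<Rightarrow> real) \<Rightarrow> (nat \<Rightarrow> real) \<Rightarrow> bool" where
  "weight_refines m n w w' \<longleftrightarrow>
     (\<forall>z\<in>atoms {1..m} n. \<forall>z'\<in>atoms {1..m} n.
        key m n w z' \<le> key m n w z \<longrightarrow> key m n w' z' \<le> key m n w' z) \<and>
     (\<forall>r<n. tight m n w r \<longrightarrow> tight m n w' r)"

lemma finite_atom_set: "finite (atom_set m n z)"
  by (cases z) (auto simp: atom_set_def tail_def)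

lemma atom_set_nonempty: "z \<in> atoms C n \<Longrightarrow> atom_set m n z \<noteq> {}"
  by (auto simp: atoms_def atom_set_def tail_def)

lemma atom_of_mem_atoms: "i \<in> {1..m+n} \<Longrightarrow> atom_of m i \<in> atoms {1..m} n"
  by (auto simp: atoms_def atom_of_def)

lemma mem_atom_set_atom_of: "i \<in> {1..m+n} \<Longrightarrow> i \<in> atom_set m n (atom_of m i)"
  by (auto simp: atom_set_def atom_of_def tail_def)

lemma key_ge: "i \<in> atom_set m n z \<Longrightarrow> w i \<le> key m n w z"
  by (simp add: key_def finite_atom_set)

lemma key_le_iff:
  "z \<in> atoms C n \<Longrightarrow> key m n w z \<le> c \<longleftrightarrow> (\<forall>i\<in>atom_set m n z. w i \<le> c)"
  unfolding key_def using finite_atom_set atom_set_nonempty by (subst Max_le_iff) auto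

lemma argmax_on_atom_set_iff:
  assumes "i \<in> {1..m+n}"
  shows "i \<in> argmax_on w (atom_set m n (atom_of m i)) \<longleftrightarrow> i \<le> m \<or> tight m n w (i - m - 1)"
  using assms by (auto simp: argmax_on_def atom_set_def atom_of_def tight_def tail_def)

lemma key_atom_of:
  assumes "i \<in> argmax_on w (atom_set m n (atom_of m i))"
  shows "key m n w (atom_of m i) = w i"
  using argmax_on_Max[OF finite_atom_set assms] by (simp add: key_def)

lemma Un_tail_mem_building_set:
  assumes "X \<subseteq> {1..m}" "r < n"
  shows "X \<union> tail m n r \<in> building_set m n"
proof -
  have "(X \<union> tail m n r) \<inter> {m+1..m+n} = {m + Suc r..m+n}"
    using assms(1) by (auto simp: tail_def)
  moreover have "m + r + 1 \<in> X \<union> tail m n r" "X \<union> tail m n r \<subseteq> {1..m+n}"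
    using assms by (auto simp: tail_def)
  ultimately show ?thesis
    unfolding building_set_def using assms(2)
    by (intro CollectI conjI impI disjI2 exI[of _ "Suc r"]) auto
qed

lemma subset_mem_building_set: "X \<noteq> {} \<Longrightarrow> X \<subseteq> {1..m} \<Longrightarrow> X \<in> building_set m n"
  unfolding building_set_def by auto

lemma atom_set_Un_mem_building_set:
  assumes "z \<in> atoms {1..m} n" "z' \<in> atoms {1..m} n"
  shows "atom_set m n z \<union> atom_set m n z' \<in> building_set m n"
proof -
  have tails: "tail m n r \<union> tail m n r' = {} \<union> tail m n (min r r')" for r r'
    by (auto simp: tail_def)
  show ?thesis
  proof (cases z; cases z')
    fix x y assume "z = Inl x" "z' = Inl y"
    then show ?thesis
      using assms by (intro subset_mem_building_set) (auto simp: atoms_def atom_set_def)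
  next
    fix x r assume "z = Inl x" "z' = Inr r"
    then show ?thesis using assms Un_tail_mem_building_set[of "{x}" m r n]
      by (auto simp: atoms_def atom_set_def)
  next
    fix r y assume "z = Inr r" "z' = Inl y"
    then show ?thesis using assms Un_tail_mem_building_set[of "{y}" m r n]
      by (auto simp: atoms_def atom_set_def Un_commute)
  next
    fix r r' assume "z = Inr r" "z' = Inr r'"
    then show ?thesis using assms Un_tail_mem_building_set[of "{}" m "min r r'" n]
      by (auto simp: atoms_def atom_set_def tails)
  qed
qed

lemma argmax_subset_imp_weight_refines:
  assumes "\<forall>I\<in>building_set m n. argmax_on w I \<subseteq> argmax_on w' I"
  shows "weight_refines m n w w'"
  unfolding weight_refines_def
proof (intro conjI ballI impI allI)
  fix z z' assume z: "z \<in> atoms {1..m} n" and z': "z' \<in> atoms {1..m} n"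
  let ?X = "atom_set m n z" and ?Y = "atom_set m n z'"
  have le_iff: "key m n v z' \<le> key m n v z \<longleftrightarrow> argmax_on v (?X \<union> ?Y) \<inter> ?X \<noteq> {}" for v
    unfolding key_def using z z' finite_atom_set atom_set_nonempty
    by (intro Max_image_le_iff_argmax_on_Un) auto
  assume "key m n w z' \<le> key m n w z"
  then show "key m n w' z' \<le> key m n w' z"
    using assms atom_set_Un_mem_building_set[OF z z'] unfolding le_iff by blast
next
  fix r assume "r < n" "tight m n w r"
  moreover have "tail m n r \<in> building_set m n"
    using Un_tail_mem_building_set[of "{}" m r n] \<open>r < n\<close> by simp
  ultimately show "tight m n w' r" using assms by (auto simp: tight_def)
qed

lemma building_set_singleton_or_closed:
  assumes "I \<in> building_set m n"
  shows "(\<exists>i. I = {i}) \<or> (\<forall>i\<in>I. atom_set m n (atom_of m i) \<subseteq> I)"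
proof (cases "card I < 2")
  case True
  moreover have "finite I" "I \<noteq> {}"
    using assms finite_subset[of I "{1..m+n}"] by (auto simp: building_set_def)
  ultimately have "card I = 1" by (simp add: Suc_leI card_gt_0_iff less_2_cases_iff)
  then show ?thesis by (auto simp: card_1_singleton_iff)
next
  case False
  then have tail: "I \<inter> {m+1..m+n} = {} \<or> (\<exists>r\<ge>1. I \<inter> {m+1..m+n} = {m+r..m+n})"
    using assms by (auto simp: building_set_def)
  have "atom_set m n (atom_of m i) \<subseteq> I" if i: "i \<in> I" for i
  proof (cases "i \<le> m")
    case False
    then have "i \<in> I \<inter> {m+1..m+n}" using i assms by (auto simp: building_set_def)
    then obtain r where r: "I \<inter> {m+1..m+n} = {m+r..m+n}" using tail by auto
    with \<open>i \<in> I \<inter> {m+1..m+n}\<close> have "m + r \<le> i" by auto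
    then show ?thesis using False r by (auto simp: atom_set_def atom_of_def tail_def)
  qed (use i in \<open>simp add: atom_set_def atom_of_def\<close>)
  then show ?thesis by blast
qed

lemma argmax_on_closed_iff:
  assumes "I \<subseteq> {1..m+n}" "\<forall>i\<in>I. atom_set m n (atom_of m i) \<subseteq> I"
  shows "i \<in> argmax_on w I \<longleftrightarrow> i \<in> I \<and> i \<in> argmax_on w (atom_set m n (atom_of m i)) \<and>
           (\<forall>j\<in>I. key m n w (atom_of m j) \<le> key m n w (atom_of m i))"
proof
  assume i: "i \<in> argmax_on w I"
  then have iI: "i \<in> I" by (simp add: argmax_on_iff)
  then have atom: "i \<in> argmax_on w (atom_set m n (atom_of m i))"
    using i assms mem_atom_set_atom_of[of i m n] by (auto simp: argmax_on_iff)
  have "key m n w (atom_of m j) \<le> w i" if "j \<in> I" for j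
    using that i assms atom_of_mem_atoms[of j m n]
    by (subst key_le_iff[where C = "{1..m}"]) (auto simp: argmax_on_iff)
  then show "i \<in> I \<and> i \<in> argmax_on w (atom_set m n (atom_of m i)) \<and>
      (\<forall>j\<in>I. key m n w (atom_of m j) \<le> key m n w (atom_of m i))"
    using iI atom key_atom_of[OF atom] by simp
next
  assume H: "i \<in> I \<and> i \<in> argmax_on w (atom_set m n (atom_of m i)) \<and>
      (\<forall>j\<in>I. key m n w (atom_of m j) \<le> key m n w (atom_of m i))"
  have "w j \<le> w i" if "j \<in> I" for j
  proof -
    have "w j \<le> key m n w (atom_of m j)"
      using key_ge mem_atom_set_atom_of that assms(1) by blast
    also have "\<dots> \<le> key m n w (atom_of m i)" using H that by blast
    also have "\<dots> = w i" using key_atom_of H by blast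
    finally show ?thesis .
  qed
  then show "i \<in> argmax_on w I" using H by (simp add: argmax_on_iff)
qed

lemma weight_refines_argmax_on_atom_set:
  assumes "weight_refines m n w w'" "i \<in> {1..m+n}"
    and "i \<in> argmax_on w (atom_set m n (atom_of m i))"
  shows "i \<in> argmax_on w' (atom_set m n (atom_of m i))"
proof -
  have "i - m - 1 < n" if "\<not> i \<le> m" using that assms(2) by simp
  then show ?thesis
    using assms unfolding argmax_on_atom_set_iff[OF assms(2)] weight_refines_def by blast
qed

lemma weight_refines_imp_argmax_subset:
  assumes W: "weight_refines m n w w'" and I: "I \<in> building_set m n"
  shows "argmax_on w I \<subseteq> argmax_on w' I"
proof
  fix i assume i: "i \<in> argmax_on w I"
  have sub: "I \<subseteq> {1..m+n}" using I by (simp add: building_set_def)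
  have key_mono: "key m n w' z' \<le> key m n w' z"
    if "z \<in> atoms {1..m} n" "z' \<in> atoms {1..m} n" "key m n w z' \<le> key m n w z" for z z'
    using W that unfolding weight_refines_def by blast
  consider "\<exists>j. I = {j}" | "\<forall>j\<in>I. atom_set m n (atom_of m j) \<subseteq> I"
    using building_set_singleton_or_closed[OF I] by blast
  then show "i \<in> argmax_on w' I"
  proof cases
    case 1
    then show ?thesis using i by (auto simp: argmax_on_iff)
  next
    case 2
    note closed_iff = argmax_on_closed_iff[OF sub 2]
    have iI: "i \<in> {1..m+n}" using i sub by (auto simp: argmax_on_iff)
    show ?thesis
      using i unfolding closed_iff
      using weight_refines_argmax_on_atom_set[OF W iI] key_mono atom_of_mem_atoms iI sub
      by (meson subsetD)
  qed
qed

lemma argmax_subset_iff_weight_refines: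
  "(\<forall>I\<in>building_set m n. argmax_on w I \<subseteq> argmax_on w' I) \<longleftrightarrow> weight_refines m n w w'"
  using argmax_subset_imp_weight_refines weight_refines_imp_argmax_subset by blast

lemma finite_nonempty_family_building_set: "finite_nonempty_family (building_set m n)"
proof
  show "finite (building_set m n)"
    by (rule finite_subset[of _ "Pow {1..m+n}"]) (auto simp: building_set_def)
  show "finite I" "I \<noteq> {}" if "I \<in> building_set m n" for I
    using that finite_subset[of I "{1..m+n}"] by (auto simp: building_set_def)
qed

lemma faces_building_nestohedron:
  fixes e :: "nat \<Rightarrow> 'a::euclidean_space"
  shows "{F. F face_of nestohedron e (building_set m n) \<and> F \<noteq> {}} =
    range (max_face (nestohedron e (building_set m n)))"
  by (rule set_eqI) (simp add: image_iff
      finite_nonempty_family.face_of_nestohedron_iff[OF finite_nonempty_family_building_set])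

section \<open>Lighted shades\<close>

text \<open>The \<open>n\<close> units of a shade are numbered \<open>0..n-1\<close> from left to right across all its
  tuples, and the atom \<open>Inr r\<close> stands for unit \<open>r\<close>. \<open>part_end s r\<close> says that unit \<open>r\<close> of
  the tuple \<open>s\<close> is the last unit of one of its entries, \<open>level S z\<close> is the index of the pair
  of \<open>S\<close> containing the light or unit \<open>z\<close>, and \<open>valid_shade C k S\<close> describes the shades with
  lights \<open>C\<close> and \<open>k\<close> units, including the empty list for \<open>C = {}\<close> and \<open>k = 0\<close>.\<close>

fun part_end :: "nat list \<Rightarrow> nat \<Rightarrow> bool" where
  "part_end [] r = False"
| "part_end (a # s) r = (if r < a then r = a - 1 else part_end s (r - a))"

fun level :: "shade \<Rightarrow> nat + nat \<Rightarrow> nat" where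
  "level [] z = 0"
| "level ((s, c) # S) z = (case z of Inl x \<Rightarrow> if x \<in> c then 0 else Suc (level S z)
     | Inr r \<Rightarrow> if r < sum_list s then 0 else Suc (level S (Inr (r - sum_list s))))"

fun part_ends :: "shade \<Rightarrow> nat \<Rightarrow> bool" where
  "part_ends [] r = False"
| "part_ends ((s, c) # S) r =
     (if r < sum_list s then part_end s r else part_ends S (r - sum_list s))"

fun valid_shade :: "nat set \<Rightarrow> nat \<Rightarrow> shade \<Rightarrow> bool" where
  "valid_shade C k [] \<longleftrightarrow> C = {} \<and> k = 0"
| "valid_shade C k ((s, c) # S) \<longleftrightarrow> (\<forall>a\<in>set s. 0 < a) \<and> (s \<noteq> [] \<or> c \<noteq> {}) \<and>
     c \<subseteq> C \<and> sum_list s \<le> k \<and> valid_shade (C - c) (k - sum_list s) S"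

text \<open>Merges and splits coarsen the order of the levels and only create part ends; by
  \<open>shade_le_iff_refines\<close> these two properties characterise the order on shades.\<close>
definition shade_refines :: "nat set \<Rightarrow> nat \<Rightarrow> shade \<Rightarrow> shade \<Rightarrow> bool" where
  "shade_refines C k S T \<longleftrightarrow>
     (\<forall>z\<in>atoms C k. \<forall>z'\<in>atoms C k. level S z \<le> level S z' \<longrightarrow> level T z \<le> level T z') \<and>
     (\<forall>r<k. part_ends S r \<longrightarrow> part_ends T r)"

definition shift_atom :: "nat \<Rightarrow> nat + nat \<Rightarrow> nat + nat" where
  "shift_atom d z = (case z of Inl x \<Rightarrow> Inl x | Inr r \<Rightarrow> Inr (r + d))"

lemma positive_sum_list_gt_0: "\<forall>a\<in>set t. 0 < (a::nat) \<Longrightarrow> t \<noteq> [] \<Longrightarrow> 0 < sum_list t"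
  by (cases t) auto

lemma part_end_append:
  "part_end (s1 @ s2) r =
     (if r < sum_list s1 then part_end s1 r else part_end s2 (r - sum_list s1))"
  by (induction s1 arbitrary: r) auto

lemma part_end_exists_ge:
  "\<forall>a\<in>set s. 0 < a \<Longrightarrow> r < sum_list s \<Longrightarrow> \<exists>q. r \<le> q \<and> q < sum_list s \<and> part_end s q"
proof (induction s arbitrary: r)
  case (Cons a s)
  show ?case
  proof (cases "r < a")
    case True
    then show ?thesis by (intro exI[of _ "a - 1"]) auto
  next
    case False
    have "r - a < sum_list s" using Cons.prems False by auto
    moreover have "\<forall>a\<in>set s. 0 < a" using Cons.prems by auto
    ultimately obtain q where "r - a \<le> q" "q < sum_list s" "part_end s q"
      using Cons.IH by blast
    then show ?thesis using False by (intro exI[of _ "q + a"]) auto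
  qed
qed simp

lemma part_end_imp_prefix: "part_end t r \<Longrightarrow> \<exists>t1 t2. t = t1 @ t2 \<and> sum_list t1 = Suc r \<and> t1 \<noteq> []"
proof (induction t arbitrary: r)
  case (Cons b t)
  show ?case
  proof (cases "r < b")
    case True
    then show ?thesis using Cons.prems by (intro exI[of _ "[b]"] exI[of _ t]) auto
  next
    case False
    have "part_end t (r - b)" using Cons.prems False by simp
    then obtain t1 t2 where "t = t1 @ t2" "sum_list t1 = Suc (r - b)" "t1 \<noteq> []"
      using Cons.IH by blast
    then show ?thesis using False by (intro exI[of _ "b # t1"] exI[of _ t2]) auto
  qed
qed simp

lemma composition_exists:
  assumes "0 < j \<Longrightarrow> E (j - 1)"
  shows "\<exists>s. (\<forall>a\<in>set s. 0 < a) \<and> sum_list s = j \<and> (\<forall>r<j. part_end s r \<longleftrightarrow> E r)"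
  using assms
proof (induction j arbitrary: E rule: less_induct)
  case (less j)
  show ?case
  proof (cases "j = 0")
    case False
    define q where "q = (LEAST r. E r)"
    have last: "E (j - 1)" using less.prems False by simp
    have q: "E q" "q < j"
      using LeastI[of E, OF last] Least_le[of E, OF last] False by (simp_all add: q_def)
    have below: "\<not> E r" if "r < q" for r
      using not_less_Least[OF that[unfolded q_def]] .
    have lt: "j - Suc q < j" using q(2) by simp
    have shifted: "E (j - Suc q - 1 + Suc q)" if "0 < j - Suc q"
    proof -
      have "j - Suc q - 1 + Suc q = j - 1" using that by linarith
      then show ?thesis using last by (simp only:)
    qed
    obtain s where s: "\<forall>a\<in>set s. 0 < a" "sum_list s = j - Suc q"
      "\<forall>r<j - Suc q. part_end s r \<longleftrightarrow> E (r + Suc q)"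
      using less.IH[of "j - Suc q" "\<lambda>r. E (r + Suc q)", OF lt shifted] by blast
    have "part_end (Suc q # s) r \<longleftrightarrow> E r" if "r < j" for r
    proof (cases "r < Suc q")
      case True
      then show ?thesis using q(1) below by (cases "r = q") simp_all
    next
      case False
      then show ?thesis using s(3)[rule_format, of "r - Suc q"] that by simp
    qed
    then show ?thesis using s q(2) by (intro exI[of _ "Suc q # s"]) auto
  qed (intro exI[of _ "[]"], simp)
qed

lemma valid_shade_iff:
  "valid_shade C k S \<longleftrightarrow>
     (\<forall>(s, c) \<in> set S. (\<forall>a \<in> set s. a > 0) \<and> (s \<noteq> [] \<or> c \<noteq> {})) \<and>
     sum_list (map (\<lambda>(s, c). sum_list s) S) = k \<and>
     sorted_wrt (\<lambda>p q. snd p \<inter> snd q = {}) S \<and>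
     (\<Union>(s, c) \<in> set S. c) = C"
proof (induction S arbitrary: C k)
  case (Cons p S)
  obtain s c where p: "p = (s, c)" by (cases p)
  have "c \<inter> (\<Union>(s, c) \<in> set S. c) = {} \<longleftrightarrow> (\<forall>q\<in>set S. c \<inter> snd q = {})"
    by (force simp: case_prod_beta)
  then show ?case
    unfolding p valid_shade.simps Cons.IH by (auto simp del: Set.Diff_eq_empty_iff)
qed auto

lemma is_shade_iff_valid_shade: "is_shade m n S \<longleftrightarrow> S \<noteq> [] \<and> valid_shade {1..m} n S"
  unfolding is_shade_def valid_shade_iff sorted_wrt_iff_nth_less by auto

lemma shade_le_refl: "shade_le X X"
  unfolding shade_le_def by simp

lemma shade_le_trans: "shade_le X Y \<Longrightarrow> shade_le Y Z \<Longrightarrow> shade_le X Z"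
  unfolding shade_le_def by (rule rtranclp_trans)

lemma shade_step_imp_le: "shade_step X Y \<Longrightarrow> shade_le X Y"
  unfolding shade_le_def by simp

lemma shade_step_Cons: "shade_step X Y \<Longrightarrow> shade_step (p # X) (p # Y)"
proof (induction rule: shade_step.induct)
  case (merge xs s1 s2 c1 c2 ys)
  then show ?case using shade_step.merge[of "p # xs" s1 s2 c1 c2 ys] by simp
next
  case (split a b xs us vs c ys)
  then show ?case using shade_step.split[of a b "p # xs" us vs c ys] by simp
qed

lemma shade_le_Cons: "shade_le X Y \<Longrightarrow> shade_le (p # X) (p # Y)"
  unfolding shade_le_def
  by (induction rule: rtranclp_induct) (auto intro: rtranclp.rtrancl_into_rtrancl shade_step_Cons)

definition drop_level :: "nat \<Rightarrow> nat \<Rightarrow> nat" where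
  "drop_level k i = (if i \<le> k then i else i - 1)"

lemma drop_level_mono: "i \<le> j \<Longrightarrow> drop_level k i \<le> drop_level k j"
  unfolding drop_level_def by auto

lemma level_merge:
  "level (xs @ [(s1 @ s2, c1 \<union> c2)] @ ys) z =
     drop_level (length xs) (level (xs @ [(s1, c1), (s2, c2)] @ ys) z)"
proof (induction xs arbitrary: z)
  case Nil
  show ?case by (cases z) (auto simp: drop_level_def)
next
  case (Cons p xs)
  obtain s c where p: "p = (s, c)" by (cases p)
  have ph: "drop_level (Suc k) (Suc i) = Suc (drop_level k i)" "drop_level (Suc k) 0 = 0" for k i
    by (auto simp: drop_level_def)
  show ?case
  proof (cases z)
    case (Inl x)
    then show ?thesis using Cons.IH[of z] by (simp add: p ph)
  next
    case (Inr r)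
    then show ?thesis using Cons.IH[of "Inr (r - sum_list s)"] by (simp add: p ph)
  qed
qed

lemma part_ends_merge:
  "part_ends (xs @ [(s1 @ s2, c1 \<union> c2)] @ ys) r = part_ends (xs @ [(s1, c1), (s2, c2)] @ ys) r"
proof (induction xs arbitrary: r)
  case Nil
  show ?case by (auto simp: part_end_append)
next
  case (Cons p xs)
  then show ?case by (cases p) simp
qed

lemma level_split:
  "level (xs @ [(us @ [a, b] @ vs, c)] @ ys) z = level (xs @ [(us @ [a + b] @ vs, c)] @ ys) z"
proof (induction xs arbitrary: z)
  case Nil
  show ?case by (cases z) (auto simp: add.assoc)
next
  case (Cons p xs)
  then show ?case by (cases p; cases z) (auto simp: add.assoc)
qed

lemma part_end_split_step:
  assumes "0 < b" "part_end (us @ [a + b] @ vs) r"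
  shows "part_end (us @ [a, b] @ vs) r"
  using assms by (auto simp: part_end_append add.assoc split: if_splits)

lemma part_ends_split:
  assumes "0 < b" "part_ends (xs @ [(us @ [a + b] @ vs, c)] @ ys) r"
  shows "part_ends (xs @ [(us @ [a, b] @ vs, c)] @ ys) r"
  using assms(2)
proof (induction xs arbitrary: r)
  case Nil
  then show ?case using part_end_split_step[OF assms(1)] by (auto simp: add.assoc split: if_splits)
next
  case (Cons p xs)
  then show ?case by (cases p) (auto simp: add.assoc split: if_splits)
qed

lemma shade_step_levels_part_ends:
  assumes "shade_step S' S"
  shows "(\<exists>f. mono f \<and> (\<forall>z. level S' z = f (level S z))) \<and> (\<forall>r. part_ends S r \<longrightarrow> part_ends S' r)"
  using assms
proof cases
  case (merge xs s1 s2 c1 c2 ys)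
  then show ?thesis
    using level_merge part_ends_merge
    by (auto intro!: exI[of _ "drop_level (length xs)"] monoI drop_level_mono)
next
  case (split a b xs us vs c ys)
  then show ?thesis
    using level_split part_ends_split by (auto intro!: exI[of _ id] monoI)
qed

lemma shade_le_imp_refines:
  assumes "shade_le T S"
  shows "shade_refines C k S T"
proof -
  have "(\<forall>z z'. level S z \<le> level S z' \<longrightarrow> level T z \<le> level T z') \<and>
    (\<forall>r. part_ends S r \<longrightarrow> part_ends T r)"
    using assms unfolding shade_le_def
  proof (induction rule: rtranclp_induct)
    case (step y z)
    obtain f where f: "mono f" "\<forall>u. level y u = f (level z u)"
      and e: "\<forall>r. part_ends z r \<longrightarrow> part_ends y r"
      using shade_step_levels_part_ends[OF step.hyps(2)] by blast
    have "level y u \<le> level y u'" if "level z u \<le> level z u'" for u u'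
      using f that by (simp add: monoD)
    then show ?case using e step.IH by blast
  qed simp
  then show ?thesis unfolding shade_refines_def by blast
qed

lemma shade_le_join_parts:
  assumes "\<forall>a\<in>set g. 0 < a" "g \<noteq> []"
  shows "shade_le ((us @ g @ vs, c) # X) ((us @ [sum_list g] @ vs, c) # X)"
  using assms
proof (induction g arbitrary: us)
  case (Cons a g)
  show ?case
  proof (cases "g = []")
    case True
    then show ?thesis by (simp add: shade_le_refl)
  next
    case False
    have pos: "0 < sum_list g" using positive_sum_list_gt_0 Cons.prems False by simp
    have "shade_le (((us @ [a]) @ g @ vs, c) # X) (((us @ [a]) @ [sum_list g] @ vs, c) # X)"
    proof -
      have "\<forall>x\<in>set g. 0 < x" using Cons.prems by simp
      from Cons.IH[of "us @ [a]", OF this False] show ?thesis .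
    qed
    moreover have "shade_step ([] @ [(us @ [a, sum_list g] @ vs, c)] @ X)
        ([] @ [(us @ [a + sum_list g] @ vs, c)] @ X)"
      using Cons.prems pos by (intro shade_step.split) auto
    ultimately show ?thesis by (auto intro: shade_le_trans shade_step_imp_le)
  qed
qed simp

lemma shade_le_refine_parts:
  assumes "\<forall>a\<in>set s. 0 < a" "\<forall>a\<in>set t. 0 < a" "sum_list s = sum_list t"
    "\<forall>r<sum_list s. part_end s r \<longrightarrow> part_end t r"
  shows "shade_le ((us @ t, c) # X) ((us @ s, c) # X)"
  using assms
proof (induction s arbitrary: t us)
  case Nil
  show ?case
  proof (cases t)
    case (Cons x t')
    have "x \<le> sum_list t" using Cons by (simp)
    then show ?thesis using Nil.prems Cons by simp
  qed (simp add: shade_le_refl)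
next
  case (Cons a s)
  have a: "0 < a" using Cons.prems by simp
  have e1: "part_end (a # s) (a - 1)" using a by simp
  have lt: "a - 1 < sum_list (a # s)" using a by simp
  have "part_end t (a - 1)" using Cons.prems(4)[rule_format, OF lt e1] .
  from part_end_imp_prefix[OF this] obtain t1 t2
    where t0: "t = t1 @ t2" "sum_list t1 = Suc (a - 1)" "t1 \<noteq> []"
    by blast
  then have t: "t = t1 @ t2" "sum_list t1 = a" "t1 \<noteq> []" using a by auto
  have t2p: "\<forall>a\<in>set t2. 0 < a" "\<forall>a\<in>set t1. 0 < a" using Cons.prems t by auto
  have st2: "sum_list s = sum_list t2" using Cons.prems t by simp
  have e2: "\<forall>r<sum_list s. part_end s r \<longrightarrow> part_end t2 r"
  proof (intro allI impI)
    fix r assume r: "r < sum_list s" "part_end s r"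
    then have e1: "part_end (a # s) (r + a)" by simp
    have lt: "r + a < sum_list (a # s)" using r by simp
    have "part_end t (r + a)" using Cons.prems(4)[rule_format, OF lt e1] .
    then show "part_end t2 r" using t by (simp add: part_end_append)
  qed
  have "shade_le (((us @ t1) @ t2, c) # X) (((us @ t1) @ s, c) # X)"
    using Cons.IH[of t2 "us @ t1"] Cons.prems st2 e2 t2p by simp
  moreover have "shade_le ((us @ t1 @ s, c) # X) ((us @ [a] @ s, c) # X)"
    using shade_le_join_parts[of t1 us s c X] t t2p by simp
  ultimately show ?case using t by (auto intro: shade_le_trans)
qed

lemma level_less_length: "valid_shade C k S \<Longrightarrow> z \<in> atoms C k \<Longrightarrow> level S z < length S"
proof (induction S arbitrary: C k z)
  case Nil
  then show ?case by (simp add: atoms_def)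
next
  case (Cons p S)
  obtain s c where p: "p = (s, c)" by (cases p)
  have v: "valid_shade (C - c) (k - sum_list s) S" "sum_list s \<le> k" using Cons.prems(1) p by auto
  show ?case
  proof (cases z)
    case (Inl x)
    then have x: "x \<in> C" using Cons.prems(2) by (auto simp: atoms_def)
    show ?thesis
    proof (cases "x \<in> c")
      case False
      then have "Inl x \<in> atoms (C - c) (k - sum_list s)" using x by (simp add: atoms_def)
      then have "level S (Inl x) < length S" using Cons.IH v by blast
      then show ?thesis using Inl False p by simp
    qed (use Inl p in simp)
  next
    case (Inr r)
    then have r: "r < k" using Cons.prems(2) by (auto simp: atoms_def)
    show ?thesis
    proof (cases "r < sum_list s")
      case False
      then have "Inr (r - sum_list s) \<in> atoms (C - c) (k - sum_list s)"
        using r by (simp add: atoms_def)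
      then have "level S (Inr (r - sum_list s)) < length S" using Cons.IH v by blast
      then show ?thesis using Inr False p by simp
    qed (use Inr p in simp)
  qed
qed

lemma level_Cons_shift_atom:
  assumes "z \<in> atoms (C - c) k'"
  shows "level ((s, c) # S) (shift_atom (sum_list s) z) = Suc (level S z)"
  using assms by (auto simp: atoms_def shift_atom_def)

lemma shift_atom_mem_atoms:
  assumes "z \<in> atoms (C - c) (k - sum_list s)" "sum_list s \<le> k"
  shows "shift_atom (sum_list s) z \<in> atoms C k"
  using assms by (auto simp: atoms_def shift_atom_def)

lemma level_Cons_neq_0E:
  assumes "z \<in> atoms C k" "sum_list s \<le> k" "level ((s, c) # S) z \<noteq> 0"
  obtains z' where "z' \<in> atoms (C - c) (k - sum_list s)" "z = shift_atom (sum_list s) z'"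
    "level ((s, c) # S) z = Suc (level S z')"
proof (cases z)
  case (Inl x)
  then have "Inl x \<in> atoms (C - c) (k - sum_list s)" "z = shift_atom (sum_list s) (Inl x)"
    using assms by (auto simp: atoms_def shift_atom_def split: if_splits)
  then show ?thesis using that level_Cons_shift_atom by blast
next
  case (Inr r)
  then have "\<not> r < sum_list s" "r < k" using assms by (auto simp: atoms_def split: if_splits)
  then have "Inr (r - sum_list s) \<in> atoms (C - c) (k - sum_list s)"
    "z = shift_atom (sum_list s) (Inr (r - sum_list s))"
    using Inr by (auto simp: atoms_def shift_atom_def)
  then show ?thesis using that level_Cons_shift_atom by blast
qed

lemma level_surjective: "valid_shade C k S \<Longrightarrow> i < length S \<Longrightarrow> \<exists>z\<in>atoms C k. level S z = i"
proof (induction S arbitrary: C k i)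
  case Nil
  then show ?case by simp
next
  case (Cons p S)
  obtain s c where p: "p = (s, c)" by (cases p)
  have v: "valid_shade (C - c) (k - sum_list s) S" "sum_list s \<le> k" "\<forall>a\<in>set s. 0 < a"
    "s \<noteq> [] \<or> c \<noteq> {}" "c \<subseteq> C"
    using Cons.prems(1) p by auto
  show ?case
  proof (cases i)
    case 0
    show ?thesis
    proof (cases "c = {}")
      case True
      then have "0 < sum_list s" using v positive_sum_list_gt_0 by blast
      then show ?thesis using v(2) 0 p by (intro bexI[of _ "Inr 0"]) (auto simp: atoms_def)
    next
      case False
      then obtain x where "x \<in> c" by blast
      then show ?thesis using v(5) 0 p by (intro bexI[of _ "Inl x"]) (auto simp: atoms_def)
    qed
  next
    case (Suc i')
    then have "i' < length S" using Cons.prems by simp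
    then obtain z where z: "z \<in> atoms (C - c) (k - sum_list s)" "level S z = i'"
      using Cons.IH v(1) by blast
    then show ?thesis
      using level_Cons_shift_atom[OF z(1), of s S] shift_atom_mem_atoms[OF z(1) v(2)] Suc p by metis
  qed
qed

lemma shade_refines_merge_first:
  assumes R: "shade_refines C k ((s, c) # (s', c') # S) T"
    and z1: "z1 \<in> atoms C k" "level ((s, c) # (s', c') # S) z1 = 1" "level T z1 = 0"
  shows "shade_refines C k ((s @ s', c \<union> c') # S) T"
proof -
  let ?S = "(s, c) # (s', c') # S" and ?Sm = "(s @ s', c \<union> c') # S"
  have lev: "level ?Sm z = level ?S z - 1" for z
    using level_merge[of "[]" s s' c c' S z] by (simp add: drop_level_def)
  have ends: "part_ends ?Sm r = part_ends ?S r" for r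
    using part_ends_merge[of "[]" s s' c c' S r] by simp
  have mono: "level T z \<le> level T z'"
    if "z \<in> atoms C k" "z' \<in> atoms C k" "level ?S z \<le> level ?S z'" for z z'
    using R that unfolding shade_refines_def by blast
  show ?thesis
    unfolding shade_refines_def
  proof (intro conjI ballI impI allI)
    fix z z' assume zz: "z \<in> atoms C k" "z' \<in> atoms C k" and le: "level ?Sm z \<le> level ?Sm z'"
    show "level T z \<le> level T z'"
    proof (cases "level ?S z \<le> level ?S z'")
      case False
      then have "level ?S z = 1" using le lev by simp
      then have "level T z \<le> level T z1" using mono[OF zz(1) z1(1)] z1(2) by simp
      then show ?thesis using z1(3) by simp
    qed (use mono zz in blast)
  next
    fix r assume "r < k" "part_ends ?Sm r"
    then show "part_ends T r" using R ends unfolding shade_refines_def by simp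
  qed
qed

lemma shade_refines_level_0_iff:
  assumes "valid_shade C k S" "shade_refines C k S T" "z0 \<in> atoms C k" "level T z0 = 0"
    and no_join: "\<forall>z\<in>atoms C k. level S z = 1 \<longrightarrow> level T z \<noteq> 0"
    and z: "z \<in> atoms C k"
  shows "level S z = 0 \<longleftrightarrow> level T z = 0"
proof -
  have mono: "level T z \<le> level T z'"
    if "z \<in> atoms C k" "z' \<in> atoms C k" "level S z \<le> level S z'" for z z'
    using assms(2) that unfolding shade_refines_def by blast
  show ?thesis
  proof
    assume "level S z = 0"
    then show "level T z = 0" using mono[OF z assms(3)] assms(4) by simp
  next
    assume Tz: "level T z = 0"
    show "level S z = 0"
    proof (rule ccontr)
      assume "level S z \<noteq> 0"
      moreover have "level S z < length S" using level_less_length[OF assms(1) z] .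
      ultimately obtain z1 where z1: "z1 \<in> atoms C k" "level S z1 = 1"
        using level_surjective[OF assms(1), of 1] by auto
      have "level T z1 \<le> level T z" using mono[OF z1(1) z] z1(2) \<open>level S z \<noteq> 0\<close> by simp
      then show False using no_join z1 Tz by simp
    qed
  qed
qed

lemma shade_refines_tail:
  assumes R: "shade_refines C k ((s, c) # S) ((t, c) # T)"
    and st: "sum_list t = sum_list s" "sum_list s \<le> k"
  shows "shade_refines (C - c) (k - sum_list s) S T"
  unfolding shade_refines_def
proof (intro conjI ballI impI allI)
  fix z z' assume zz: "z \<in> atoms (C - c) (k - sum_list s)" "z' \<in> atoms (C - c) (k - sum_list s)"
    and le: "level S z \<le> level S z'"
  have "shift_atom (sum_list s) z \<in> atoms C k" "shift_atom (sum_list s) z' \<in> atoms C k"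
    using shift_atom_mem_atoms zz st(2) by blast+
  moreover have "level ((s, c) # S) (shift_atom (sum_list s) z) \<le>
      level ((s, c) # S) (shift_atom (sum_list s) z')"
    using level_Cons_shift_atom[OF zz(1), of s S] level_Cons_shift_atom[OF zz(2), of s S] le by simp
  ultimately have "level ((t, c) # T) (shift_atom (sum_list s) z) \<le>
      level ((t, c) # T) (shift_atom (sum_list s) z')"
    using R unfolding shade_refines_def by blast
  then show "level T z \<le> level T z'"
    using level_Cons_shift_atom[OF zz(1), of t T] level_Cons_shift_atom[OF zz(2), of t T]
    by (simp add: st)
next
  fix r assume "r < k - sum_list s" "part_ends S r"
  then show "part_ends T r"
    using R st unfolding shade_refines_def by (auto elim: allE[of _ "r + sum_list s"])
qed

lemma shade_refines_Cons_Cons: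
  assumes vS: "valid_shade C k ((s, c) # S)" and vT: "valid_shade C k ((t, d) # T)"
    and R: "shade_refines C k ((s, c) # S) ((t, d) # T)"
    and no_join: "\<forall>z\<in>atoms C k. level ((s, c) # S) z = 1 \<longrightarrow> level ((t, d) # T) z \<noteq> 0"
  shows "d = c" "sum_list t = sum_list s" "\<forall>r<sum_list s. part_end s r \<longrightarrow> part_end t r"
    and "shade_refines (C - c) (k - sum_list s) S T"
proof -
  obtain z0 where z0: "z0 \<in> atoms C k" "level ((t, d) # T) z0 = 0"
    using level_surjective[OF vT, of 0] by auto
  note level0 = shade_refines_level_0_iff[OF vS R z0 no_join]
  have "x \<in> c \<longleftrightarrow> x \<in> d" if "x \<in> C" for x
    using level0[of "Inl x"] that by (simp add: atoms_def split: if_splits)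
  then show cd: "d = c" using vS vT by auto
  have rr: "r < sum_list s \<longleftrightarrow> r < sum_list t" if "r < k" for r
    using level0[of "Inr r"] that by (simp add: atoms_def split: if_splits)
  have "sum_list s \<le> k" "sum_list t \<le> k" using vS vT by auto
  then show st: "sum_list t = sum_list s"
    using rr[of "sum_list s"] rr[of "sum_list t"] by linarith
  have "part_ends ((t, d) # T) r" if "r < k" "part_ends ((s, c) # S) r" for r
    using R that unfolding shade_refines_def by blast
  then show "\<forall>r<sum_list s. part_end s r \<longrightarrow> part_end t r"
    using \<open>sum_list s \<le> k\<close> st by auto
  show "shade_refines (C - c) (k - sum_list s) S T"
    using shade_refines_tail R st \<open>sum_list s \<le> k\<close> cd by blast
qed

lemma valid_shade_Nil: "valid_shade {} 0 T \<longleftrightarrow> T = []"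
proof (cases T)
  case (Cons p T')
  obtain t d where "p = (t, d)" by (cases p)
  then show ?thesis using Cons by (cases t) auto
qed simp

lemma valid_shade_merge_first:
  assumes "valid_shade C k ((s, c) # (s', c') # S)"
  shows "valid_shade C k ((s @ s', c \<union> c') # S)"
proof -
  have "C - (c \<union> c') = C - c - c'" by auto
  then show ?thesis using assms by (auto simp: diff_diff_add)
qed

text \<open>If an atom of the second pair of \<open>S\<close> lies in the first pair of \<open>T\<close>, merging the first
  two pairs of \<open>S\<close> keeps it above \<open>T\<close>; otherwise the first pairs carry the same lights and
  units, and the first tuple of \<open>T\<close> splits that of \<open>S\<close>.\<close>
lemma shade_refines_imp_le:
  assumes "valid_shade C k S" "valid_shade C k T" "shade_refines C k S T"
  shows "shade_le T S"
  using assms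
proof (induction "length S" arbitrary: S T C k rule: less_induct)
  case less
  show ?case
  proof (cases S)
    case Nil
    then show ?thesis using less.prems(1,2) valid_shade_Nil shade_le_refl by auto
  next
    case (Cons p S1)
    obtain s c where S: "S = (s, c) # S1" using Cons by (cases p) auto
    obtain z0 where "z0 \<in> atoms C k" using level_surjective[OF less.prems(1), of 0] S by auto
    then have "T \<noteq> []" using less.prems(2) by (auto simp: atoms_def)
    then obtain t d T1 where T: "T = (t, d) # T1" by (metis list.exhaust surj_pair)
    show ?thesis
    proof (cases "\<exists>z1\<in>atoms C k. level S z1 = 1 \<and> level T z1 = 0")
      case True
      then obtain z1 where z1: "z1 \<in> atoms C k" "level S z1 = 1" "level T z1 = 0" by blast
      then have "1 < length S" using level_less_length[OF less.prems(1) z1(1)] by simp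
      then obtain s' c' S2 where S1: "S1 = (s', c') # S2" using S by (cases S1) auto
      let ?Sm = "(s @ s', c \<union> c') # S2"
      have "valid_shade C k ((s, c) # (s', c') # S2)" using less.prems(1) by (simp only: S S1)
      then have "valid_shade C k ?Sm" by (rule valid_shade_merge_first)
      moreover have "shade_refines C k ?Sm T"
        using shade_refines_merge_first less.prems(3) z1 by (simp add: S S1)
      ultimately have "shade_le T ?Sm"
        using less.hyps[of ?Sm C k T] less.prems(2) by (simp add: S S1)
      moreover have "shade_step ?Sm S"
        using shade_step.merge[of "[]" s s' c c' S2] by (simp add: S S1)
      ultimately show ?thesis by (blast intro: shade_le_trans shade_step_imp_le)
    next
      case False
      then have no_join: "\<forall>z\<in>atoms C k. level S z = 1 \<longrightarrow> level T z \<noteq> 0" by auto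
      note first = shade_refines_Cons_Cons[OF less.prems(1,2)[unfolded S T]
          less.prems(3)[unfolded S T] no_join[unfolded S T]]
      have "valid_shade (C - c) (k - sum_list s) S1" "valid_shade (C - c) (k - sum_list s) T1"
        using less.prems(1,2) first(1,2) by (auto simp: S T)
      then have "shade_le T1 S1" using less.hyps first(4) by (simp add: S)
      then have "shade_le ((t, c) # T1) ((t, c) # S1)" by (rule shade_le_Cons)
      moreover have "shade_le (([] @ t, c) # S1) (([] @ s, c) # S1)"
        using shade_le_refine_parts[of s t "[]" c S1] less.prems(1,2) first(2,3) by (simp add: S T)
      ultimately show ?thesis using first(1) by (auto simp: S T intro: shade_le_trans)
    qed
  qed
qed

lemma shade_le_iff_refines:
  assumes "valid_shade C k S" "valid_shade C k T"
  shows "shade_le T S \<longleftrightarrow> shade_refines C k S T"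
proof
  assume "shade_le T S"
  then show "shade_refines C k S T" by (rule shade_le_imp_refines)
next
  assume "shade_refines C k S T"
  then show "shade_le T S" using shade_refines_imp_le assms by blast
qed

definition shade_rank :: "shade \<Rightarrow> int" where
  "shade_rank S = int (sum_list (map (\<lambda>(s, c). length s) S)) - int (length S)"

lemma shade_step_rank: "shade_step S' S \<Longrightarrow> shade_rank S' = shade_rank S + 1"
  by (induction rule: shade_step.induct) (auto simp: shade_rank_def)

lemma shade_le_rank:
  "shade_le X Y \<Longrightarrow> shade_rank Y \<le> shade_rank X \<and> (shade_rank X = shade_rank Y \<longrightarrow> X = Y)"
  unfolding shade_le_def
proof (induction rule: rtranclp_induct)
  case (step y z)
  then show ?case using shade_step_rank[OF step.hyps(2)] by auto
qed simp

lemma shade_le_antisym: "shade_le X Y \<Longrightarrow> shade_le Y X \<Longrightarrow> X = Y"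
  using shade_le_rank[of X Y] shade_le_rank[of Y X] by simp

lemma level_Inr_mono: "r \<le> r' \<Longrightarrow> level S (Inr r) \<le> level S (Inr r')"
proof (induction S arbitrary: r r')
  case (Cons p S)
  obtain s c where p: "p = (s, c)" by (cases p)
  show ?case
  proof (cases "r' < sum_list s")
    case False
    then show ?thesis using Cons.IH[of "r - sum_list s" "r' - sum_list s"] Cons.prems p by auto
  qed (use Cons.prems p in auto)
qed simp

lemma part_ends_exists_ge:
  "valid_shade C k S \<Longrightarrow> r < k \<Longrightarrow>
     \<exists>q. r \<le> q \<and> q < k \<and> part_ends S q \<and> level S (Inr q) = level S (Inr r)"
proof (induction S arbitrary: C k r)
  case Nil
  then show ?case by simp
next
  case (Cons p S)
  obtain s c where p: "p = (s, c)" by (cases p)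
  have v: "valid_shade (C - c) (k - sum_list s) S" "sum_list s \<le> k" "\<forall>a\<in>set s. 0 < a"
    using Cons.prems(1) p by auto
  show ?case
  proof (cases "r < sum_list s")
    case True
    then obtain q where q: "r \<le> q" "q < sum_list s" "part_end s q"
      using part_end_exists_ge v(3) by blast
    then show ?thesis using True p v(2) by (intro exI[of _ q]) auto
  next
    case False
    then have "r - sum_list s < k - sum_list s" using Cons.prems(2) by simp
    then obtain q where q: "r - sum_list s \<le> q" "q < k - sum_list s" "part_ends S q"
      "level S (Inr q) = level S (Inr (r - sum_list s))"
      using Cons.IH v(1) by blast
    then show ?thesis using False p by (intro exI[of _ "q + sum_list s"]) auto
  qed
qed

section \<open>Shades of weight vectors\<close>

definition represents ::
  "nat set \<Rightarrow> nat \<Rightarrow> (nat + nat \<Rightarrow> real) \<Rightarrow> (nat \<Rightarrow> bool) \<Rightarrow> shade \<Rightarrow> bool" where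
  "represents C k f E S \<longleftrightarrow> valid_shade C k S \<and>
     (\<forall>z\<in>atoms C k. \<forall>z'\<in>atoms C k. f z' \<le> f z \<longleftrightarrow> level S z \<le> level S z') \<and>
     (\<forall>r<k. E r \<longleftrightarrow> part_ends S r)"

lemma represents_refines_iff:
  assumes "represents C k f E S" "represents C k f' E' T"
  shows "shade_refines C k S T \<longleftrightarrow>
    (\<forall>z\<in>atoms C k. \<forall>z'\<in>atoms C k. f z' \<le> f z \<longrightarrow> f' z' \<le> f' z) \<and> (\<forall>r<k. E r \<longrightarrow> E' r)"
  using assms unfolding represents_def shade_refines_def by simp

lemma represents_unique:
  assumes "represents C k f E S" "represents C k f E T"
  shows "S = T"
proof -
  have "shade_refines C k S T" "shade_refines C k T S"
    using represents_refines_iff[OF assms] represents_refines_iff[OF assms(2,1)] by simp_all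
  moreover have "valid_shade C k S" "valid_shade C k T"
    using assms unfolding represents_def by blast+
  ultimately have "shade_le T S" "shade_le S T" using shade_le_iff_refines by blast+
  then show ?thesis by (simp add: shade_le_antisym)
qed

lemma card_Diff_add_diff_less:
  assumes "finite C" "c \<subseteq> C" "j \<le> k" "c \<noteq> {} \<or> 0 < j"
  shows "card (C - c) + (k - j) < card C + k"
proof (cases "c = {}")
  case False
  then have "card (C - c) < card C"
    using assms(1,2) by (intro psubset_card_mono) auto
  then show ?thesis using assms(3) by simp
qed (use assms in simp)

lemma antitone_level_set_prefix:
  fixes g :: "nat \<Rightarrow> 'a::linorder"
  assumes "\<And>r r'. r \<le> r' \<Longrightarrow> r' < k \<Longrightarrow> g r' \<le> g r" "\<And>r. r < k \<Longrightarrow> g r \<le> V"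
  obtains j where "j \<le> k" "\<And>r. r < k \<Longrightarrow> g r = V \<longleftrightarrow> r < j"
    and "0 < j \<Longrightarrow> j < k \<Longrightarrow> g j < g (j - 1)"
proof -
  define j where "j = (LEAST r. k \<le> r \<or> g r \<noteq> V)"
  have "j \<le> k" unfolding j_def by (rule Least_le) simp
  have top: "g r = V" if "r < j" for r
    using not_less_Least[OF that[unfolded j_def]] by simp
  have drop: "g j < V" if "j < k"
  proof -
    have "k \<le> j \<or> g j \<noteq> V" unfolding j_def by (rule LeastI[of _ k]) simp
    then show ?thesis using assms(2)[of j] that by (simp add: order.order_iff_strict)
  qed
  have "g r \<noteq> V" if "j \<le> r" "r < k" for r
    using drop assms(1)[OF that] that by fastforce
  then have "g r = V \<longleftrightarrow> r < j" if "r < k" for r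
    using top that not_le by blast
  moreover have "g j < g (j - 1)" if "0 < j" "j < k"
    using drop top[of "j - 1"] that by simp
  ultimately show ?thesis using that \<open>j \<le> k\<close> by blast
qed

lemma represents_Cons:
  fixes f :: "nat + nat \<Rightarrow> real"
  assumes top: "\<forall>z\<in>atoms C k. f z \<le> V" and c: "c = {x\<in>C. f (Inl x) = V}"
    and j: "j \<le> k" "\<forall>r<k. f (Inr r) = V \<longleftrightarrow> r < j"
    and s: "\<forall>a\<in>set s. 0 < a" "sum_list s = j" "\<forall>r<j. part_end s r \<longleftrightarrow> E r"
    and nonempty: "c \<noteq> {} \<or> 0 < j"
    and S': "represents (C - c) (k - j) (\<lambda>z. f (shift_atom j z)) (\<lambda>r. E (r + j)) S'"
  shows "represents C k f E ((s, c) # S')"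
proof -
  let ?S = "(s, c) # S'"
  have valid: "valid_shade C k ?S"
    using s nonempty j(1) S' c by (auto simp: represents_def)
  have top_level: "level ?S z = 0 \<longleftrightarrow> f z = V" if "z \<in> atoms C k" for z
    using that c j(2) s(2) by (auto simp: atoms_def)
  have order: "f z' \<le> f z \<longleftrightarrow> level ?S z \<le> level ?S z'"
    if zz: "z \<in> atoms C k" "z' \<in> atoms C k" for z z'
  proof (cases "f z = V")
    case True
    then show ?thesis using top_level zz top by fastforce
  next
    case False
    then obtain y where y: "y \<in> atoms (C - c) (k - j)" "z = shift_atom j y"
      "level ?S z = Suc (level S' y)"
      using level_Cons_neq_0E[OF zz(1)] top_level[OF zz(1)] j(1) s(2) by metis
    show ?thesis
    proof (cases "f z' = V")
      case True
      then show ?thesis using top_level[OF zz(2)] top zz(1) False y(3) by fastforce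
    next
      case False
      then obtain y' where y': "y' \<in> atoms (C - c) (k - j)" "z' = shift_atom j y'"
        "level ?S z' = Suc (level S' y')"
        using level_Cons_neq_0E[OF zz(2)] top_level[OF zz(2)] j(1) s(2) by metis
      show ?thesis using S' y y' unfolding represents_def by auto
    qed
  qed
  have ends: "E r \<longleftrightarrow> part_ends ?S r" if "r < k" for r
  proof (cases "r < j")
    case False
    then have "r - j < k - j" using that by simp
    then have "E (r - j + j) \<longleftrightarrow> part_ends S' (r - j)"
      using S' unfolding represents_def by blast
    then show ?thesis using False s(2) by simp
  qed (use s in simp)
  show ?thesis unfolding represents_def using valid order ends by blast
qed

lemma represents_exists:
  fixes f :: "nat + nat \<Rightarrow> real"
  assumes "finite C"
    and "\<And>r r'. r \<le> r' \<Longrightarrow> r' < k \<Longrightarrow> f (Inr r') \<le> f (Inr r)"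
    and "0 < k \<Longrightarrow> E (k - 1)"
    and "\<And>r. Suc r < k \<Longrightarrow> f (Inr (Suc r)) < f (Inr r) \<Longrightarrow> E r"
  shows "\<exists>S. represents C k f E S"
  using assms
proof (induction "card C + k" arbitrary: C k f E rule: less_induct)
  case less
  show ?case
  proof (cases "atoms C k = {}")
    case True
    then have "C = {}" "k = 0" by (auto simp: atoms_def)
    then show ?thesis by (intro exI[of _ "[]"]) (simp add: represents_def atoms_def)
  next
    case False
    have fin: "finite (atoms C k)" using less.prems(1) by (simp add: atoms_def)
    define V where "V = Max (f ` atoms C k)"
    have top: "\<forall>z\<in>atoms C k. f z \<le> V" using fin by (simp add: V_def)
    have "V \<in> f ` atoms C k" using fin False by (simp add: V_def)
    then obtain z0 where z0: "z0 \<in> atoms C k" "f z0 = V" by blast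
    define c where "c = {x\<in>C. f (Inl x) = V}"
    have "f (Inr r) \<le> V" if "r < k" for r using top that by (simp add: atoms_def)
    then obtain j where j: "j \<le> k" "\<forall>r<k. f (Inr r) = V \<longleftrightarrow> r < j"
      and drop: "0 < j \<Longrightarrow> j < k \<Longrightarrow> f (Inr j) < f (Inr (j - 1))"
      using antitone_level_set_prefix[of k "\<lambda>r. f (Inr r)" V] less.prems(2) by metis
    have "E (j - 1)" if "0 < j"
    proof (cases "j = k")
      case False
      then show ?thesis using less.prems(4)[of "j - 1"] drop that j(1) by simp
    qed (use less.prems(3) that in simp)
    then obtain s where s: "\<forall>a\<in>set s. 0 < a" "sum_list s = j" "\<forall>r<j. part_end s r \<longleftrightarrow> E r"
      using composition_exists[of j E] by blast
    have nonempty: "c \<noteq> {} \<or> 0 < j"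
      using z0 j by (auto simp: atoms_def c_def)
    have "c \<subseteq> C" by (simp add: c_def)
    then have "card (C - c) + (k - j) < card C + k"
      by (rule card_Diff_add_diff_less[OF less.prems(1) _ j(1) nonempty])
    moreover have "finite (C - c)" using less.prems(1) by simp
    ultimately have "\<exists>S'. represents (C - c) (k - j) (\<lambda>z. f (shift_atom j z)) (\<lambda>r. E (r + j)) S'"
      using less.hyps[of "C - c" "k - j" "\<lambda>z. f (shift_atom j z)" "\<lambda>r. E (r + j)"]
        less.prems(2-4) by (simp add: shift_atom_def)
    then obtain S' where "represents (C - c) (k - j) (\<lambda>z. f (shift_atom j z)) (\<lambda>r. E (r + j)) S'" ..
    then show ?thesis
      using represents_Cons[OF top c_def j s nonempty] by blast
  qed
qed

lemma key_Inr_antimono: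
  assumes "r \<le> r'" "r' < n"
  shows "key m n w (Inr r') \<le> key m n w (Inr r)"
proof -
  have "Inr r' \<in> atoms {1..m} n" using assms(2) by (simp add: atoms_def)
  moreover have "tail m n r' \<subseteq> tail m n r" using assms(1) by (auto simp: tail_def)
  ultimately show ?thesis
    using key_ge[of _ m n "Inr r" w] by (auto simp: key_le_iff atom_set_def)
qed

lemma tight_iff_key:
  assumes "r < n"
  shows "tight m n w r \<longleftrightarrow> w (m + r + 1) = key m n w (Inr r)"
proof
  assume "tight m n w r"
  then show "w (m + r + 1) = key m n w (Inr r)"
    using argmax_on_Max[OF finite_atom_set[of m n "Inr r"]]
    by (simp add: tight_def key_def atom_set_def)
next
  assume "w (m + r + 1) = key m n w (Inr r)"
  then show "tight m n w r"
    using key_ge[of _ m n "Inr r" w] assms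
    by (auto simp: tight_def argmax_on_iff atom_set_def tail_def)
qed

lemma tight_if_key_drop:
  assumes "Suc r < n" "key m n w (Inr (Suc r)) < key m n w (Inr r)"
  shows "tight m n w r"
proof -
  have "Inr r \<in> atoms {1..m} n" using assms(1) by (simp add: atoms_def)
  then have "key m n w (Inr r) \<in> w ` atom_set m n (Inr r)"
    unfolding key_def using finite_atom_set atom_set_nonempty by (intro Max_in) auto
  then obtain q where q: "q \<in> tail m n r" "w q = key m n w (Inr r)"
    by (auto simp: atom_set_def)
  have "q = m + r + 1"
  proof (rule ccontr)
    assume "q \<noteq> m + r + 1"
    then have "q \<in> atom_set m n (Inr (Suc r))" using q(1) by (auto simp: atom_set_def tail_def)
    then show False using key_ge[of q m n "Inr (Suc r)" w] q(2) assms(2) by simp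
  qed
  then show ?thesis using tight_iff_key assms(1) q(2) by simp
qed

lemma represents_key_tight_exists: "\<exists>S. represents {1..m} n (key m n w) (tight m n w) S"
proof (rule represents_exists)
  show "key m n w (Inr r') \<le> key m n w (Inr r)" if "r \<le> r'" "r' < n" for r r'
    using key_Inr_antimono that .
  show "tight m n w (n - 1)" if "0 < n"
    using that by (simp add: tight_def tail_def argmax_on_iff)
  show "tight m n w r" if "Suc r < n" "key m n w (Inr (Suc r)) < key m n w (Inr r)" for r
    using tight_if_key_drop that .
qed simp

text \<open>Units that do not end a part are lowered by one, so that a tail attains its maximum,
  minus the level of its first unit, at that unit exactly when the unit ends a part.\<close>
definition shade_weights :: "nat \<Rightarrow> shade \<Rightarrow> nat \<Rightarrow> real" where
  "shade_weights m S i = (if i \<le> m then - real (level S (Inl i))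
     else - real (level S (Inr (i - m - 1))) - (if part_ends S (i - m - 1) then 0 else 1))"

lemma key_shade_weights_Inr:
  assumes "valid_shade {1..m} n S" "r < n"
  shows "key m n (shade_weights m S) (Inr r) = - real (level S (Inr r))"
proof (rule antisym)
  have "Inr r \<in> atoms {1..m} n" using assms(2) by (simp add: atoms_def)
  moreover have "shade_weights m S q \<le> - real (level S (Inr r))" if "q \<in> tail m n r" for q
  proof -
    have "m < q" "r \<le> q - m - 1" using that by (auto simp: tail_def)
    then show ?thesis
      using level_Inr_mono[of r "q - m - 1" S] by (auto simp: shade_weights_def)
  qed
  ultimately show "key m n (shade_weights m S) (Inr r) \<le> - real (level S (Inr r))"
    by (simp add: key_le_iff atom_set_def)
next
  obtain q where q: "r \<le> q" "q < n" "part_ends S q" "level S (Inr q) = level S (Inr r)"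
    using part_ends_exists_ge[OF assms] by blast
  then have "m + q + 1 \<in> atom_set m n (Inr r)" by (simp add: atom_set_def tail_def)
  from key_ge[OF this, of "shade_weights m S"]
  show "- real (level S (Inr r)) \<le> key m n (shade_weights m S) (Inr r)"
    using q by (simp add: shade_weights_def)
qed

lemma represents_shade_weights:
  assumes "valid_shade {1..m} n S"
  shows "represents {1..m} n (key m n (shade_weights m S)) (tight m n (shade_weights m S)) S"
proof -
  have key: "key m n (shade_weights m S) z = - real (level S z)" if "z \<in> atoms {1..m} n" for z
    using that key_shade_weights_Inr[OF assms]
    by (auto simp: atoms_def key_def atom_set_def shade_weights_def)
  have tight: "tight m n (shade_weights m S) r \<longleftrightarrow> part_ends S r" if "r < n" for r
    using that key_shade_weights_Inr[OF assms that] by (simp add: tight_iff_key shade_weights_def)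
  show ?thesis using assms key tight unfolding represents_def by simp
qed

definition shade_of :: "nat \<Rightarrow> nat \<Rightarrow> (nat \<Rightarrow> real) \<Rightarrow> shade" where
  "shade_of m n w = (THE S. represents {1..m} n (key m n w) (tight m n w) S)"

lemma shade_of_eqI: "represents {1..m} n (key m n w) (tight m n w) S \<Longrightarrow> shade_of m n w = S"
  unfolding shade_of_def by (blast intro: the_equality represents_unique)

lemma represents_shade_of: "represents {1..m} n (key m n w) (tight m n w) (shade_of m n w)"
  using represents_key_tight_exists shade_of_eqI by metis

lemma shade_of_cong:
  assumes "\<And>i. i \<in> {1..m+n} \<Longrightarrow> w i = w' i"
  shows "shade_of m n w = shade_of m n w'"
proof (rule shade_of_eqI)
  have sub: "atom_set m n z \<subseteq> {1..m+n}" if "z \<in> atoms {1..m} n" for z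
    using that by (auto simp: atoms_def atom_set_def tail_def)
  have key: "key m n w z = key m n w' z" if "z \<in> atoms {1..m} n" for z
  proof -
    have "w ` atom_set m n z = w' ` atom_set m n z"
      using sub[OF that] assms by (intro image_cong refl) (simp add: subset_iff)
    then show ?thesis by (simp add: key_def)
  qed
  have "tail m n r \<subseteq> {1..m+n}" for r by (auto simp: tail_def)
  then have tight: "tight m n w r = tight m n w' r" for r
    unfolding tight_def using assms by (subst argmax_on_cong[of _ w w']) (auto simp: subset_iff)
  show "represents {1..m} n (key m n w) (tight m n w) (shade_of m n w')"
    using represents_shade_of[of m n w'] unfolding represents_def by (simp add: key tight)
qed

lemma shade_of_mem_shades:
  assumes "1 \<le> m + n"
  shows "shade_of m n w \<in> shades m n"
proof -
  have "valid_shade {1..m} n (shade_of m n w)"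
    using represents_shade_of unfolding represents_def by blast
  moreover from this have "shade_of m n w \<noteq> []" using assms by auto
  ultimately show ?thesis by (simp add: shades_def is_shade_iff_valid_shade)
qed

lemma weight_refines_iff_shade_le:
  "weight_refines m n w w' \<longleftrightarrow> shade_le (shade_of m n w') (shade_of m n w)"
proof -
  have "valid_shade {1..m} n (shade_of m n v)" for v
    using represents_shade_of unfolding represents_def by blast
  then have "shade_le (shade_of m n w') (shade_of m n w) \<longleftrightarrow>
      shade_refines {1..m} n (shade_of m n w) (shade_of m n w')"
    by (simp add: shade_le_iff_refines)
  also have "\<dots> \<longleftrightarrow> weight_refines m n w w'"
    unfolding weight_refines_def
    by (rule represents_refines_iff[OF represents_shade_of represents_shade_of])
  finally show ?thesis by simp
qed

lemma max_face_building_nestohedron_subset_iff: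
  "max_face (nestohedron e (building_set m n)) a \<subseteq> max_face (nestohedron e (building_set m n)) b
     \<longleftrightarrow> shade_le (shade_of m n (weight e b)) (shade_of m n (weight e a))"
  using finite_nonempty_family.max_face_nestohedron_subset_iff[OF finite_nonempty_family_building_set]
  by (simp add: argmax_subset_iff_weight_refines weight_refines_iff_shade_le)

lemma exists_inner_axis_eq:
  fixes idx :: "nat \<Rightarrow> 'N::finite"
  assumes "bij_betw idx A (UNIV :: 'N set)"
  shows "\<exists>a::real^'N. \<forall>i\<in>A. a \<bullet> axis (idx i) 1 = w i"
proof
  show "\<forall>i\<in>A. (\<chi> k. w (inv_into A idx k)) \<bullet> axis (idx i) 1 = w i"
    using assms by (simp add: inner_axis bij_betw_def inv_into_f_f)
qed

lemma range_shade_of_axis_weights: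
  fixes idx :: "nat \<Rightarrow> 'N::finite"
  assumes "1 \<le> m + n" "bij_betw idx {1..m+n} (UNIV :: 'N set)"
  shows "range (\<lambda>a::real^'N. shade_of m n (weight (\<lambda>i. axis (idx i) 1) a)) = shades m n"
proof
  show "range (\<lambda>a::real^'N. shade_of m n (weight (\<lambda>i. axis (idx i) 1) a)) \<subseteq> shades m n"
    using shade_of_mem_shades assms(1) by blast
  show "shades m n \<subseteq> range (\<lambda>a::real^'N. shade_of m n (weight (\<lambda>i. axis (idx i) 1) a))"
  proof
    fix S assume "S \<in> shades m n"
    then have S: "valid_shade {1..m} n S" by (simp add: shades_def is_shade_iff_valid_shade)
    obtain a :: "real^'N" where "\<forall>i\<in>{1..m+n}. a \<bullet> axis (idx i) 1 = shade_weights m S i"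
      using exists_inner_axis_eq[OF assms(2)] by blast
    then have "shade_of m n (weight (\<lambda>i. axis (idx i) 1) a) = shade_of m n (shade_weights m S)"
      by (intro shade_of_cong) (simp add: weight_def)
    also have "\<dots> = S" by (rule shade_of_eqI[OF represents_shade_weights[OF S]])
    finally show "S \<in> range (\<lambda>a::real^'N. shade_of m n (weight (\<lambda>i. axis (idx i) 1) a))"
      by (metis rangeI)
  qed
qed

lemma exists_anti_isomorphism_of_parametrization:
  assumes order: "\<And>a b. P a \<subseteq> P b \<longleftrightarrow> R (g b) (g a)" and range: "range g = Y"
    and antisym: "\<And>x y. R x y \<Longrightarrow> R y x \<Longrightarrow> x = y"
  shows "\<exists>f. bij_betw f (range P) Y \<and> (\<forall>F\<in>range P. \<forall>G\<in>range P. F \<subseteq> G \<longleftrightarrow> R (f G) (f F))"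
proof -
  define f where "f F = g (SOME a. F = P a)" for F
  have f: "F = P a \<Longrightarrow> P (SOME a. F = P a) = F" for F a by (metis (mono_tags) someI)
  have ord: "F \<subseteq> G \<longleftrightarrow> R (f G) (f F)" if "F \<in> range P" "G \<in> range P" for F G
    using that f order unfolding f_def by (metis rangeE)
  have "inj_on f (range P)"
    using ord by (intro inj_onI) (metis order_refl subset_antisym)
  moreover have "f ` range P = Y"
  proof
    show "f ` range P \<subseteq> Y" using range unfolding f_def by blast
    show "Y \<subseteq> f ` range P"
    proof
      fix y assume "y \<in> Y"
      then obtain a where a: "y = g a" using range by blast
      have "P (SOME b. P a = P b) = P a" using f by blast
      then have "f (P a) = y" using order antisym unfolding f_def a by (metis order_refl)
      then show "y \<in> f ` range P" by blast
    qed
  qed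
  ultimately show ?thesis using ord unfolding bij_betw_def by blast
qed

theorem proposition2p3:
  fixes m n :: nat and idx :: "nat \<Rightarrow> 'N::finite"
  assumes "m + n \<ge> 1"
    and "bij_betw idx {1..m+n} (UNIV :: 'N set)"
  shows "\<exists>f. bij_betw f
               {F. F face_of nestohedron (\<lambda>i. axis (idx i) (1::real)) (building_set m n) \<and> F \<noteq> {}}
               (shades m n)
           \<and> (\<forall>F G. F face_of nestohedron (\<lambda>i. axis (idx i) (1::real)) (building_set m n) \<and> F \<noteq> {} \<and>
                     G face_of nestohedron (\<lambda>i. axis (idx i) (1::real)) (building_set m n) \<and> G \<noteq> {} \<longrightarrow>
                     (F \<subseteq> G \<longleftrightarrow> shade_le (f G) (f F)))"
proof -
  let ?P = "nestohedron (\<lambda>i. axis (idx i) (1::real)) (building_set m n)"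
  obtain f where f: "bij_betw f (range (max_face ?P)) (shades m n)"
    "\<forall>F\<in>range (max_face ?P). \<forall>G\<in>range (max_face ?P). F \<subseteq> G \<longleftrightarrow> shade_le (f G) (f F)"
    using exists_anti_isomorphism_of_parametrization[where P = "max_face ?P" and R = shade_le
        and g = "\<lambda>a. shade_of m n (weight (\<lambda>i. axis (idx i) 1) a)",
        OF max_face_building_nestohedron_subset_iff range_shade_of_axis_weights[OF assms]
        shade_le_antisym]
    by blast
  have face: "F face_of ?P \<and> F \<noteq> {} \<longleftrightarrow> F \<in> range (max_face ?P)" for F
    unfolding faces_building_nestohedron[symmetric] by simp
  show ?thesis
  proof (intro exI conjI allI impI)
    show "bij_betw f {F. F face_of ?P \<and> F \<noteq> {}} (shades m n)"
      unfolding faces_building_nestohedron by (rule f(1))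
    fix F G assume "F face_of ?P \<and> F \<noteq> {} \<and> G face_of ?P \<and> G \<noteq> {}"
    then have "F \<in> range (max_face ?P)" "G \<in> range (max_face ?P)" using face by blast+
    then show "F \<subseteq> G \<longleftrightarrow> shade_le (f G) (f F)" using f(2) by blast
  qed
qed

end
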